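(* Let $p\in(0,1)$ and $d\ge2$ an integer. Define the path $$\gamma_1=\Big\{-1+\frac{\sin(\phi(d-1))}{\sin(\phi d)}e^{i\phi}:\ \phi\in[0,\pi/d)\Big\}$$ (the point at $\phi=0$ being $-1/d$, by continuity). Then $v(1+v)^{d-1}\in\mathbb{R}$ for all $v\in\gamma_1$. Moreover, for every $v\in\gamma_1$ and every solution $u$ of $u(1+u)^{d-1}=v(1+v)^{d-1}$ with $u\notin\{v,\bar v\}$, $$\big|u(1/p+u)^{d/p-1}\big|\neq\big|v(1/p+v)^{d/p-1}\big|.$$
   Context: $|z(1/p+z)^{d/p-1}|$ means $|z|\,|1/p+z|^{d/p-1}$. *)

theory Defs
  imports "HOL-Analysis.Analysis"
begin

definition gamma1_pt :: "nat \<Rightarrow> real \<Rightarrow> complex" where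
  "gamma1_pt d \<phi> =
     (if \<phi> = 0 then - 1 / of_nat d
      else - 1 + complex_of_real (sin (\<phi> * (real d - 1)) / sin (\<phi> * real d)) * cis \<phi>)"

definition gamma1 :: "nat \<Rightarrow> complex set" where
  "gamma1 d = gamma1_pt d ` {0..<pi / real d}"

end

theory Submission
  imports Defs "HOL-Real_Asymp.Real_Asymp"
begin

text \<open>Write n = d - 1 and q = 1/p > 1. On gamma_1 one has 1 + v = (sin (n phi) / sin (d phi)) e^(i phi)
  and v = -(sin phi / sin (d phi)) e^(-i n phi), so v (1 + v)^n = -K with
  K = sin phi sin (n phi)^n / sin (d phi)^d; a log-derivative argument shows K >= n^n / d^d, the value
  at phi = 0.

  On the level set |x| |1 + x|^n = K everything is a function of r = |1 + x|: |x| = K / r^n and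
  |q + x|^2 = q r^2 + q (q - 1) - (q - 1) K^2 / r^(2n). Hence ln (|x| |q + x|^(d q - 1)) is ln K plus
  a function of r whose derivative has the sign of (n + 1) r^2 + n (n + 1) K^2 / r^(2n) - n. By
  weighted AM-GM this is positive except at one point as soon as K >= n^n / d^d, so that function is
  strictly increasing. Equal weighted norms therefore force |1 + u| = |1 + v| and |u| = |v|, i.e.
  u = v or u = conj v.\<close>

lemma cmod_of_real_add_sq:
  fixes x :: complex and q :: real
  shows "cmod (of_real q + x) ^ 2 = q * cmod (1 + x) ^ 2 + q * (q - 1) - (q - 1) * cmod x ^ 2"
  unfolding cmod_power2 by (simp add: power2_eq_square algebra_simps)

lemma eq_or_cnj_if_cmod_eq:
  fixes u v :: complex
  assumes "cmod u = cmod v" and "cmod (1 + u) = cmod (1 + v)"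
  shows "u = v \<or> u = cnj v"
proof -
  have "Re u ^ 2 + Im u ^ 2 = Re v ^ 2 + Im v ^ 2"
    using assms(1) by (simp add: cmod_def)
  moreover have "(1 + Re u) ^ 2 + Im u ^ 2 = (1 + Re v) ^ 2 + Im v ^ 2"
    using assms(2) by (simp add: cmod_def)
  ultimately have "Re u = Re v"
    by (simp add: power2_eq_square algebra_simps)
  moreover from this \<open>Re u ^ 2 + Im u ^ 2 = Re v ^ 2 + Im v ^ 2\<close>
  have "Im u ^ 2 = Im v ^ 2" by simp
  ultimately show ?thesis
    by (auto simp: power2_eq_iff complex_eq_iff)
qed

lemma power_amgm_gt:
  fixes z :: real
  assumes "1 \<le> n" and "0 < z" and "z \<noteq> 1"
  shows "real n + 1 < real n * z + 1 / z ^ n"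
proof -
  have "1 + real n * (1 / z - 1) \<le> (1 + (1 / z - 1)) ^ n"
    using assms(2) by (intro Bernoulli_inequality) simp
  then have "real n * (z + 1 / z - 2) \<le> real n * z + 1 / z ^ n - (real n + 1)"
    by (simp add: power_one_over algebra_simps)
  moreover have "z + 1 / z - 2 = (z - 1) ^ 2 / z"
    using assms(2) by (simp add: field_simps power2_eq_square)
  then have "0 < real n * (z + 1 / z - 2)"
    using assms by simp
  ultimately show ?thesis by linarith
qed

lemma DERIV_pos_except_imp_less:
  fixes f f' :: "real \<Rightarrow> real"
  assumes "a < b"
    and deriv: "\<And>x. a \<le> x \<Longrightarrow> x \<le> b \<Longrightarrow> (f has_real_derivative f' x) (at x)"
    and pos: "\<And>x. a \<le> x \<Longrightarrow> x \<le> b \<Longrightarrow> x \<noteq> c \<Longrightarrow> 0 < f' x"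
  shows "f a < f b"
proof -
  have less: "f x < f y" if "a \<le> x" "x < y" "y \<le> b" "c \<notin> {x<..<y}" for x y
  proof (rule DERIV_pos_imp_increasing_open[OF \<open>x < y\<close>])
    fix z assume "x < z" "z < y"
    with that show "\<exists>D. (f has_real_derivative D) (at z) \<and> 0 < D"
      using deriv pos by (intro exI[of _ "f' z"]) auto
  next
    show "continuous_on {x..y} f"
      using that by (auto intro!: continuous_at_imp_continuous_on DERIV_isCont deriv)
  qed
  show ?thesis
  proof (cases "c \<in> {a<..<b}")
    case True
    then show ?thesis
      using less[of a c] less[of c b] by fastforce
  next
    case False
    then show ?thesis
      using less[of a b] \<open>a < b\<close> by simp
  qed
qed

lemma cot_weighted_sum_gt:
  fixes m a b :: real
  assumes "0 \<le> m" and "0 < sin a" and "0 < sin b" and "0 < sin (a + b)"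
  shows "(m + 1) ^ 2 * cos (a + b) / sin (a + b) < m ^ 2 * cos a / sin a + cos b / sin b"
proof -
  define sa ca sb cb where "sa = sin a" and "ca = cos a" and "sb = sin b" and "cb = cos b"
  have sin_ab: "sin (a + b) = sa * cb + ca * sb" and cos_ab: "cos (a + b) = ca * cb - sa * sb"
    by (simp_all add: sa_def ca_def sb_def cb_def sin_add cos_add)
  have "(m ^ 2 * ca / sa + cb / sb - (m + 1) ^ 2 * cos (a + b) / sin (a + b))
          * (sa * sb * sin (a + b))
      = m ^ 2 * ca * sb * sin (a + b) + cb * sa * sin (a + b) - (m + 1) ^ 2 * cos (a + b) * sa * sb"
    using assms by (simp add: sa_def sb_def field_simps)
  also have "\<dots> = (m * ca * sb - sa * cb) ^ 2 + ((m + 1) * sa * sb) ^ 2"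
    unfolding sin_ab cos_ab by algebra
  also have "\<dots> > 0"
    using assms by (intro add_nonneg_pos) (simp_all add: sa_def sb_def)
  finally have "0 < (m ^ 2 * ca / sa + cb / sb - (m + 1) ^ 2 * cos (a + b) / sin (a + b))
      * (sa * sb * sin (a + b))" .
  moreover have "0 < sa * sb * sin (a + b)"
    using assms by (simp add: sa_def sb_def)
  ultimately have "0 < m ^ 2 * ca / sa + cb / sb - (m + 1) ^ 2 * cos (a + b) / sin (a + b)"
    by (rule zero_less_mult_pos2)
  then show ?thesis
    by (simp add: sa_def ca_def sb_def cb_def)
qed

lemma sin_multiple_pos:
  fixes n :: nat and x :: real
  assumes "0 < x" and "x < pi / real (n + 1)"
  shows "0 < sin x" and "0 < sin (real (n + 1) * x)" and "1 \<le> n \<Longrightarrow> 0 < sin (real n * x)"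
proof -
  have "real (n + 1) * x < pi"
    using assms by (simp add: field_simps)
  moreover have "x \<le> real (n + 1) * x" and "real n * x \<le> real (n + 1) * x"
    using assms by (simp_all add: field_simps)
  ultimately have "x < pi" and "real n * x < pi"
    by linarith+
  with \<open>real (n + 1) * x < pi\<close> assms show "0 < sin x" "0 < sin (real (n + 1) * x)"
    by (auto intro!: sin_gt_zero)
  show "0 < sin (real n * x)" if "1 \<le> n"
    using that assms \<open>real n * x < pi\<close> by (auto intro!: sin_gt_zero)
qed

lemma ln_sin_power_ratio_less:
  fixes n :: nat and x y :: real
  defines "k \<equiv> \<lambda>t. ln (sin t) + real n * ln (sin (real n * t))
                     - real (n + 1) * ln (sin (real (n + 1) * t))"
  assumes "1 \<le> n" and "0 < x" and "x < y" and "y < pi / real (n + 1)"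
  shows "k x < k y"
proof (rule DERIV_pos_imp_increasing[OF \<open>x < y\<close>])
  fix t assume "x \<le> t" "t \<le> y"
  with assms have "0 < t" "t < pi / real (n + 1)"
    by linarith+
  then have sin_pos: "0 < sin t" "0 < sin (real n * t)" "0 < sin (real (n + 1) * t)"
    using sin_multiple_pos assms(2) by simp_all
  then have "(k has_real_derivative
               cos t / sin t + (real n) ^ 2 * cos (real n * t) / sin (real n * t)
               - (real n + 1) ^ 2 * cos (real (n + 1) * t) / sin (real (n + 1) * t)) (at t)"
    unfolding k_def by (auto intro!: derivative_eq_intros simp: field_simps power2_eq_square)
  moreover have "0 < cos t / sin t + (real n) ^ 2 * cos (real n * t) / sin (real n * t)
               - (real n + 1) ^ 2 * cos (real (n + 1) * t) / sin (real (n + 1) * t)"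
  proof -
    have "real (n + 1) * t = real n * t + t"
      by (simp add: algebra_simps)
    with sin_pos cot_weighted_sum_gt[of "real n" "real n * t" t] show ?thesis
      by simp
  qed
  ultimately show "\<exists>D. (k has_real_derivative D) (at t) \<and> 0 < D"
    by blast
qed

lemma sin_power_ratio_ge:
  fixes n :: nat and t :: real
  assumes "1 \<le> n" and "0 < t" and "t < pi / real (n + 1)"
  shows "real n ^ n / real (n + 1) ^ (n + 1)
           \<le> sin t * sin (real n * t) ^ n / sin (real (n + 1) * t) ^ (n + 1)"
proof -
  define k where "k x = ln (sin x) + real n * ln (sin (real n * x))
                          - real (n + 1) * ln (sin (real (n + 1) * x))" for x
  define L where "L = real n * ln (real n) - real (n + 1) * ln (real (n + 1))"
  have "(k \<longlongrightarrow> L) (at_right 0)"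
  proof -
    have "0 < real n"
      using assms(1) by simp
    then have "((\<lambda>x. ln (sin x) + real n * ln (sin (real n * x))
                    - (real n + 1) * ln (sin ((real n + 1) * x)))
                 \<longlongrightarrow> real n * ln (real n) - (real n + 1) * ln (real n + 1)) (at_right 0)"
      by real_asymp
    then show ?thesis
      unfolding k_def L_def by (simp add: add.commute)
  qed
  moreover have "\<forall>\<^sub>F x in at_right 0. k x \<le> k t"
    unfolding eventually_at_right_field k_def
    using assms ln_sin_power_ratio_less[of n _ t] by (blast intro: less_imp_le)
  ultimately have "L \<le> k t"
    by (rule tendsto_upperbound) simp
  then have "exp L \<le> exp (k t)"
    by simp
  moreover have "exp L = real n ^ n / real (n + 1) ^ (n + 1)"
    using assms(1) unfolding L_def by (simp add: exp_diff ln_realpow[symmetric] del: of_nat_Suc)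
  moreover have "exp (k t) = sin t * sin (real n * t) ^ n / sin (real (n + 1) * t) ^ (n + 1)"
    using sin_multiple_pos[OF assms(2,3)] assms(1) unfolding k_def
    by (simp add: exp_diff exp_add ln_realpow[symmetric] del: of_nat_Suc)
  ultimately show ?thesis
    by simp
qed

lemma gamma1_pt_mult_power_eq:
  fixes n :: nat and t :: real
  assumes "t \<noteq> 0" and "sin (real (n + 1) * t) \<noteq> 0"
  shows "gamma1_pt (n + 1) t * (1 + gamma1_pt (n + 1) t) ^ n =
         - of_real (sin t * sin (real n * t) ^ n / sin (real (n + 1) * t) ^ (n + 1))"
proof -
  define S where "S = sin (real (n + 1) * t)"
  define a R where "a = sin t / S" and "R = sin (real n * t) / S"
  have "S \<noteq> 0" using assms(2) by (simp add: S_def)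
  have v: "gamma1_pt (n + 1) t = of_real R * cis t - 1"
    using assms(1) by (simp add: gamma1_pt_def R_def S_def mult.commute)
  also have "\<dots> = - of_real a * cis (- (real n * t))"
  proof -
    have "real (n + 1) * t = real n * t + t" by (simp add: algebra_simps)
    then have "S = sin (real n * t) * cos t + cos (real n * t) * sin t"
      unfolding S_def by (simp add: sin_add)
    with \<open>S \<noteq> 0\<close> show ?thesis
      by (simp add: complex_eq_iff a_def R_def field_simps)
  qed
  finally have "gamma1_pt (n + 1) t = - of_real a * cis (- (real n * t))" .
  moreover have "1 + gamma1_pt (n + 1) t = of_real R * cis t"
    using v by simp
  ultimately have "gamma1_pt (n + 1) t * (1 + gamma1_pt (n + 1) t) ^ n =
      - of_real (a * R ^ n) * (cis (- (real n * t)) * cis t ^ n)"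
    by (simp add: power_mult_distrib mult_ac)
  also have "cis (- (real n * t)) * cis t ^ n = 1"
    by (simp add: Complex.DeMoivre cis_mult)
  also have "a * R ^ n = sin t * sin (real n * t) ^ n / S ^ (n + 1)"
    by (simp add: a_def R_def power_divide)
  finally show ?thesis
    by (simp add: S_def)
qed

lemma gamma1_mult_power_eq_neg_real:
  assumes "1 \<le> n" and "v \<in> gamma1 (n + 1)"
  obtains K where "real n ^ n / real (n + 1) ^ (n + 1) \<le> K" and "v * (1 + v) ^ n = - of_real K"
proof -
  obtain t where "0 \<le> t" and "t < pi / real (n + 1)" and v: "v = gamma1_pt (n + 1) t"
    using assms(2) unfolding gamma1_def by auto
  show thesis
  proof (cases "t = 0")
    case True
    then have "v = - of_real (1 / real (n + 1))"
      by (simp add: v gamma1_pt_def)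
    moreover have "(1 + of_nat n :: complex) \<noteq> 0"
      by (metis of_nat_Suc of_nat_neq_0)
    then have "1 - 1 / (1 + of_nat n) = (of_nat n / (1 + of_nat n) :: complex)"
      by (simp add: field_simps)
    ultimately have "v * (1 + v) ^ n = - of_real (real n ^ n / real (n + 1) ^ (n + 1))"
      by (simp add: power_divide flip: of_real_diff)
    then show thesis
      by (rule that[OF order_refl])
  next
    case False
    with \<open>0 \<le> t\<close> have "0 < t" by simp
    then show thesis
      using that sin_power_ratio_ge[OF assms(1) \<open>0 < t\<close> \<open>t < pi / real (n + 1)\<close>]
        gamma1_pt_mult_power_eq[OF False]
        sin_multiple_pos(2)[OF \<open>0 < t\<close> \<open>t < pi / real (n + 1)\<close>] v
      by simp
  qed
qed

text \<open>If |x| |1 + x|^n = K and r = |1 + x|, then level_shift_sq n q K r = |q + x|^2 and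
  level_log_profile n q K r = ln (|x| |q + x|^((n + 1) q - 1)) - ln K.\<close>

definition level_shift_sq :: "nat \<Rightarrow> real \<Rightarrow> real \<Rightarrow> real \<Rightarrow> real" where
  "level_shift_sq n q K r = q * r ^ 2 + q * (q - 1) - (q - 1) * K ^ 2 / r ^ (2 * n)"

definition level_log_profile :: "nat \<Rightarrow> real \<Rightarrow> real \<Rightarrow> real \<Rightarrow> real" where
  "level_log_profile n q K r =
     (real (n + 1) * q - 1) / 2 * ln (level_shift_sq n q K r) - real n * ln r"

definition level_profile_factor :: "nat \<Rightarrow> real \<Rightarrow> real \<Rightarrow> real" where
  "level_profile_factor n K r =
     real (n + 1) * r ^ 2 + real n * real (n + 1) * (K ^ 2 / r ^ (2 * n)) - real n"

lemma level_shift_sq_mono: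
  assumes "1 \<le> q" and "0 < a" and "a \<le> b"
  shows "level_shift_sq n q K a \<le> level_shift_sq n q K b"
proof -
  have "a ^ 2 \<le> b ^ 2" and "a ^ (2 * n) \<le> b ^ (2 * n)"
    using assms by (simp_all add: power_mono)
  then have "q * a ^ 2 \<le> q * b ^ 2"
    and "(q - 1) * (K ^ 2 / b ^ (2 * n)) \<le> (q - 1) * (K ^ 2 / a ^ (2 * n))"
    using assms by (auto intro!: mult_left_mono divide_left_mono)
  then show ?thesis
    unfolding level_shift_sq_def by simp
qed

lemma level_shift_sq_deriv:
  assumes "0 < r"
  shows "(level_shift_sq n q K has_real_derivative
            2 * q * r + 2 * real n * (q - 1) * K ^ 2 / r ^ (2 * n + 1)) (at r)"
proof (cases "n = 0")
  case True
  then show ?thesis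
    unfolding level_shift_sq_def by (auto intro!: derivative_eq_intros)
next
  case False
  have "r ^ (2 * n - Suc 0) = r ^ (2 * n) / r"
    using False assms by (simp add: power_diff)
  with assms show ?thesis
    unfolding level_shift_sq_def
    by (auto intro!: derivative_eq_intros)
qed

lemma level_profile_factor_pos:
  assumes "1 \<le> n" and "real n ^ n / real (n + 1) ^ (n + 1) \<le> K"
    and "0 < r" and "r \<noteq> real n / real (n + 1)"
  shows "0 < level_profile_factor n K r"
proof -
  define K0 where "K0 = real n ^ n / real (n + 1) ^ (n + 1)"
  \<comment> \<open>For K = K0 the factor is n/(n+1) (n z + 1/z^n - (n+1)): weighted AM-GM.\<close>
  define y where "y = real (n + 1) * r / real n"
  define z where "z = y ^ 2"
  have "0 < real n" and "0 < K0" and "0 < y" and "0 < z"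
    using assms by (simp_all add: K0_def y_def z_def)
  have "z \<noteq> 1"
    using assms \<open>0 < real n\<close> \<open>0 < y\<close>
    by (auto simp: z_def y_def power2_eq_1_iff field_simps)
  have "r ^ (2 * n) = (r ^ n) ^ 2"
    by (simp add: mult.commute flip: power_mult)
  also have "r ^ n = K0 * real (n + 1) * y ^ n"
    using \<open>0 < real n\<close> by (simp add: K0_def y_def power_mult_distrib power_divide)
  also have "(K0 * real (n + 1) * y ^ n) ^ 2 = K0 ^ 2 * (real (n + 1) ^ 2 * z ^ n)"
    by (simp add: z_def power_mult_distrib mult.commute flip: power_mult)
  finally have K0_sq: "K0 ^ 2 / r ^ (2 * n) = 1 / (real (n + 1) ^ 2 * z ^ n)"
    using \<open>0 < K0\<close> \<open>0 < z\<close> by simp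
  have "real n = real n / real (n + 1) * (real n + 1)"
    by (simp add: add.commute)
  also have "\<dots> < real n / real (n + 1) * (real n * z + 1 / z ^ n)"
    using power_amgm_gt[of n z] assms(1) \<open>0 < z\<close> \<open>z \<noteq> 1\<close> \<open>0 < real n\<close>
    by (intro mult_strict_left_mono) simp_all
  also have "\<dots> = real (n + 1) * r ^ 2 + real n * real (n + 1) * (K0 ^ 2 / r ^ (2 * n))"
  proof -
    have "real n / real (n + 1) * (real n * z) = real (n + 1) * r ^ 2"
      using \<open>0 < real n\<close>
      by (simp add: z_def y_def power_divide power_mult_distrib power2_eq_square)
    moreover have "real n / real (n + 1) * (1 / z ^ n)
        = real n * real (n + 1) * (K0 ^ 2 / r ^ (2 * n))"
      unfolding K0_sq using \<open>0 < z\<close> by (simp add: power2_eq_square)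
    ultimately show ?thesis
      by (simp only: distrib_left)
  qed
  also have "\<dots> \<le> real (n + 1) * r ^ 2 + real n * real (n + 1) * (K ^ 2 / r ^ (2 * n))"
    using assms(2,3) \<open>0 < K0\<close> unfolding K0_def[symmetric]
    by (auto intro!: divide_right_mono mult_left_mono power_mono)
  finally show ?thesis
    by (simp add: level_profile_factor_def)
qed

lemma level_log_profile_deriv:
  assumes "0 < r" and "0 < level_shift_sq n q K r"
  shows "(level_log_profile n q K has_real_derivative
            q * (q - 1) * level_profile_factor n K r / (r * level_shift_sq n q K r)) (at r)"
proof -
  define A P X where "A = real (n + 1) * q - 1" and "P = level_shift_sq n q K r"
    and "X = K ^ 2 / r ^ (2 * n)"
  define P' where "P' = 2 * q * r + 2 * real n * (q - 1) * K ^ 2 / r ^ (2 * n + 1)"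
  have P_eq: "P = q * r ^ 2 + q * (q - 1) - (q - 1) * X"
    by (simp add: P_def X_def level_shift_sq_def)
  have "(level_log_profile n q K has_real_derivative A / 2 * (P' / P) - real n / r) (at r)"
    unfolding level_log_profile_def A_def P_def P'_def using assms
    by (auto intro!: derivative_eq_intros level_shift_sq_deriv)
  then show ?thesis
  proof (rule DERIV_cong)
    have "A / 2 * (P' / P) - real n / r = (A * (P' * r / 2) - real n * P) / (r * P)"
      using assms by (simp add: P_def field_simps)
    also have "P' * r / 2 = q * r ^ 2 + real n * (q - 1) * X"
      using assms(1) by (simp add: P'_def X_def field_simps power2_eq_square)
    also have "A * (q * r ^ 2 + real n * (q - 1) * X) - real n * P
        = q * (q - 1) * (real (n + 1) * r ^ 2 + real n * real (n + 1) * X - real n)"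
      unfolding P_eq A_def by (simp add: algebra_simps power2_eq_square)
    finally show "A / 2 * (P' / P) - real n / r
        = q * (q - 1) * level_profile_factor n K r / (r * level_shift_sq n q K r)"
      by (simp add: P_def X_def level_profile_factor_def)
  qed
qed

lemma level_log_profile_less:
  assumes "1 \<le> n" and "1 < q" and "real n ^ n / real (n + 1) ^ (n + 1) \<le> K"
    and "0 < a" and "a < b" and "0 < level_shift_sq n q K a"
  shows "level_log_profile n q K a < level_log_profile n q K b"
proof (rule DERIV_pos_except_imp_less[OF \<open>a < b\<close>])
  fix x assume "a \<le> x" "x \<le> b"
  then have "0 < x" and P_pos: "0 < level_shift_sq n q K x"
    using assms level_shift_sq_mono[of q a x n K] by auto
  then show "(level_log_profile n q K has_real_derivative
            q * (q - 1) * level_profile_factor n K x / (x * level_shift_sq n q K x)) (at x)"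
    by (rule level_log_profile_deriv)
  assume "x \<noteq> real n / real (n + 1)"
  with \<open>0 < x\<close> assms(1,3) have "0 < level_profile_factor n K x"
    by (intro level_profile_factor_pos)
  with \<open>0 < x\<close> P_pos \<open>1 < q\<close>
  show "0 < q * (q - 1) * level_profile_factor n K x / (x * level_shift_sq n q K x)"
    by simp
qed

lemma inj_on_level_log_profile:
  assumes "1 \<le> n" and "1 < q" and "real n ^ n / real (n + 1) ^ (n + 1) \<le> K"
  shows "inj_on (level_log_profile n q K) {r. 0 < r \<and> 0 < level_shift_sq n q K r}"
proof (rule inj_onI, rule ccontr)
  fix a b
  assume a: "a \<in> {r. 0 < r \<and> 0 < level_shift_sq n q K r}"
    and b: "b \<in> {r. 0 < r \<and> 0 < level_shift_sq n q K r}"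
    and eq: "level_log_profile n q K a = level_log_profile n q K b" and "a \<noteq> b"
  then consider "a < b" | "b < a"
    by linarith
  then show False
  proof cases
    case 1
    with a eq level_log_profile_less[OF assms, of a b] show False
      by simp
  next
    case 2
    with b eq level_log_profile_less[OF assms, of b a] show False
      by simp
  qed
qed

lemma cmod_of_real_add_sq_level:
  fixes x :: complex
  assumes "cmod x * cmod (1 + x) ^ n = K" and "1 + x \<noteq> 0"
  shows "cmod (of_real q + x) ^ 2 = level_shift_sq n q K (cmod (1 + x))"
proof -
  have "cmod x = K / cmod (1 + x) ^ n"
    using assms by (simp add: field_simps)
  then have "cmod x ^ 2 = K ^ 2 / cmod (1 + x) ^ (2 * n)"
    by (simp add: power_divide mult.commute flip: power_mult)
  then show ?thesis
    by (simp add: cmod_of_real_add_sq level_shift_sq_def)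
qed

lemma ln_level_weighted_norm:
  fixes x :: complex
  assumes "1 \<le> n" and "0 < K" and "cmod x * cmod (1 + x) ^ n = K" and "of_real q + x \<noteq> 0"
  shows "ln (cmod x * cmod (of_real q + x) powr (real (n + 1) * q - 1))
           = ln K + level_log_profile n q K (cmod (1 + x))"
proof -
  define r where "r = cmod (1 + x)"
  have "1 + x \<noteq> 0"
    using assms by (auto simp: power_0_left)
  then have "0 < r"
    by (simp add: r_def)
  have "cmod x = K / r ^ n"
    using assms(3) \<open>0 < r\<close> by (simp add: r_def field_simps)
  then have ln_x: "ln (cmod x) = ln K - real n * ln r"
    using assms(2) \<open>0 < r\<close> by (simp add: ln_div ln_realpow)
  have "cmod (of_real q + x) ^ 2 = level_shift_sq n q K r"
    unfolding r_def using assms(3) \<open>1 + x \<noteq> 0\<close> by (rule cmod_of_real_add_sq_level)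
  then have ln_shift: "ln (cmod (of_real q + x)) = ln (level_shift_sq n q K r) / 2"
    using assms(4) by (simp add: ln_realpow flip: \<open>cmod (of_real q + x) ^ 2 = _\<close>)
  have "0 < cmod x"
    using \<open>cmod x = K / r ^ n\<close> assms(2) \<open>0 < r\<close> by simp
  then show ?thesis
    using assms(4) by (simp add: ln_mult ln_powr ln_x ln_shift level_log_profile_def r_def)
qed

lemma level_weighted_norm_eq_imp_eq_or_cnj:
  fixes u v :: complex
  assumes "1 \<le> n" and "1 < q" and "real n ^ n / real (n + 1) ^ (n + 1) \<le> K"
    and u: "cmod u * cmod (1 + u) ^ n = K" and v: "cmod v * cmod (1 + v) ^ n = K"
    and eq: "cmod u * cmod (of_real q + u) powr (real (n + 1) * q - 1)
           = cmod v * cmod (of_real q + v) powr (real (n + 1) * q - 1)"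
  shows "u = v \<or> u = cnj v"
proof -
  have "0 < real n ^ n / real (n + 1) ^ (n + 1)"
    using assms(1) by simp
  with assms(3) have "0 < K"
    by linarith
  then have "u \<noteq> 0" "v \<noteq> 0" "1 + u \<noteq> 0" "1 + v \<noteq> 0"
    using assms(1) u v by (auto simp: power_0_left)
  have "cmod u * cmod (of_real q + u) powr (real (n + 1) * q - 1) = 0
      \<longleftrightarrow> cmod v * cmod (of_real q + v) powr (real (n + 1) * q - 1) = 0"
    by (simp only: eq)
  with \<open>u \<noteq> 0\<close> \<open>v \<noteq> 0\<close> have shift_zero: "of_real q + u = 0 \<longleftrightarrow> of_real q + v = 0"
    by simp
  show ?thesis
  proof (cases "of_real q + v = 0")
    case True
    with shift_zero show ?thesis
      by (simp add: add_eq_0_iff)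
  next
    case False
    with shift_zero have "of_real q + u \<noteq> 0" by simp
    have profile_eq:
        "level_log_profile n q K (cmod (1 + u)) = level_log_profile n q K (cmod (1 + v))"
      using ln_level_weighted_norm[OF assms(1) \<open>0 < K\<close> u \<open>of_real q + u \<noteq> 0\<close>]
        ln_level_weighted_norm[OF assms(1) \<open>0 < K\<close> v False] eq by simp
    have "0 < level_shift_sq n q K (cmod (1 + u))"
      using \<open>of_real q + u \<noteq> 0\<close>
      by (simp flip: cmod_of_real_add_sq_level[OF u \<open>1 + u \<noteq> 0\<close>])
    moreover have "0 < level_shift_sq n q K (cmod (1 + v))"
      using False by (simp flip: cmod_of_real_add_sq_level[OF v \<open>1 + v \<noteq> 0\<close>])
    ultimately have norm_eq: "cmod (1 + u) = cmod (1 + v)"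
      using inj_onD[OF inj_on_level_log_profile[OF assms(1-3)] profile_eq]
        \<open>1 + u \<noteq> 0\<close> \<open>1 + v \<noteq> 0\<close> by simp
    then have "cmod u * cmod (1 + v) ^ n = cmod v * cmod (1 + v) ^ n"
      using u v by simp
    with \<open>1 + v \<noteq> 0\<close> have "cmod u = cmod v"
      by simp
    with norm_eq show ?thesis
      by (simp add: eq_or_cnj_if_cmod_eq)
  qed
qed

lemma gamma1_weighted_norm_ne:
  fixes u v :: complex
  assumes "1 \<le> n" and "1 < q" and "v \<in> gamma1 (n + 1)"
    and "u * (1 + u) ^ n = v * (1 + v) ^ n" and "u \<noteq> v" and "u \<noteq> cnj v"
  shows "cmod u * cmod (of_real q + u) powr (real (n + 1) * q - 1)
           \<noteq> cmod v * cmod (of_real q + v) powr (real (n + 1) * q - 1)"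
proof -
  obtain K where K: "real n ^ n / real (n + 1) ^ (n + 1) \<le> K"
    and v: "v * (1 + v) ^ n = - of_real K"
    using gamma1_mult_power_eq_neg_real[OF assms(1,3)] .
  have "0 \<le> K"
    using K by (auto intro: order_trans[rotated])
  with v have "cmod (v * (1 + v) ^ n) = K"
    by simp
  moreover from this assms(4) have "cmod (u * (1 + u) ^ n) = K"
    by simp
  ultimately have "cmod u * cmod (1 + u) ^ n = K" and "cmod v * cmod (1 + v) ^ n = K"
    by (simp_all add: norm_mult norm_power)
  with level_weighted_norm_eq_imp_eq_or_cnj[OF assms(1,2) K] assms(5,6) show ?thesis
    by blast
qed

theorem lemma5p6:
  fixes p :: real and d :: nat
  assumes "0 < p" and "p < 1" and "d \<ge> 2"
  shows "(\<forall>v\<in>gamma1 d. v * (1 + v) ^ (d - 1) \<in> \<real>) \<and>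
         (\<forall>v\<in>gamma1 d. \<forall>u :: complex.
            u * (1 + u) ^ (d - 1) = v * (1 + v) ^ (d - 1) \<and> u \<noteq> v \<and> u \<noteq> cnj v \<longrightarrow>
            cmod u * cmod (complex_of_real (1 / p) + u) powr (real d / p - 1) \<noteq>
            cmod v * cmod (complex_of_real (1 / p) + v) powr (real d / p - 1))"
proof -
  obtain n where "1 \<le> n" and d: "d = n + 1"
    using assms(3) by (intro that[of "d - 1"]) auto
  have "1 < 1 / p"
    using assms(1,2) by simp
  have exponent: "real d / p - 1 = real (n + 1) * (1 / p) - 1"
    by (simp add: d)
  show ?thesis
    unfolding exponent unfolding d diff_add_inverse2
  proof (intro conjI ballI allI impI)
    fix v assume "v \<in> gamma1 (n + 1)"
    then obtain K where "v * (1 + v) ^ n = - of_real K"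
      using gamma1_mult_power_eq_neg_real[OF \<open>1 \<le> n\<close>] by blast
    then show "v * (1 + v) ^ n \<in> \<real>"
      by simp
  next
    fix v u
    assume "v \<in> gamma1 (n + 1)"
      and "u * (1 + u) ^ n = v * (1 + v) ^ n \<and> u \<noteq> v \<and> u \<noteq> cnj v"
    then show "cmod u * cmod (of_real (1 / p) + u) powr (real (n + 1) * (1 / p) - 1)
        \<noteq> cmod v * cmod (of_real (1 / p) + v) powr (real (n + 1) * (1 / p) - 1)"
      using gamma1_weighted_norm_ne[OF \<open>1 \<le> n\<close> \<open>1 < 1 / p\<close>] by blast
  qed
qed

end
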